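(* Assume $P_S(s)>0$ for all $s$ and $P_{Y|X}(y|x)>0$ for all $x,y$, and let $f:(0,\infty)\to\mathbb R$ be continuously differentiable with the saddle property. Let $Q\in\mathcal Q$, put $a(\hat s|s)=Q_{S,\widehat S}(s,\hat s)/P_S(s)$ and $b=Q_X$, and assume $a(\hat s|s)>0$ for all $s,\hat s$. Let $\lambda\ge0$ satisfy $\lambda\big(\Psi(b)-\Phi(a)\big)=0$, let $\mu^b\in\mathbb R$, $\mu^a:\mathcal S\to\mathbb R$ be arbitrary, and let $\nu^b:\mathcal X\to[0,\infty)$ satisfy $\sum_x\nu^b(x)b(x)=0$. Define $$\delta(s,\hat s)=-\frac{\lambda}{P_S(s)}\frac{\partial\Phi}{\partial a(\hat s|s)}(a)+\mu^a(s),\qquad \rho(x)=\lambda\frac{\partial\Psi}{\partial b(x)}(b)+\mu^b+\nu^b(x).$$ Then $Q$ minimizes $Q'\mapsto\sum_{(s,x,y,\hat s)\in\mathcal Z}Q'(s,x,y,\hat s)\big(\delta(s,\hat s)+\rho(x)\big)$ over $Q'\in\mathcal Q$.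
   Context: $\mathcal S,\mathcal X,\mathcal Y,\widehat{\mathcal S}$ are finite nonempty sets, $\mathcal Z=\mathcal S\times\mathcal X\times\mathcal Y\times\widehat{\mathcal S}$, $P_S$ a fixed pmf on $\mathcal S$, $P_{Y|X}$ a fixed channel from $\mathcal X$ to $\mathcal Y$. $\mathcal Q$ is the set of pmfs on $\mathcal Z$ of the form $Q(s,x,y,\hat s)=P_S(s)Q_{X|S}(x|s)P_{Y|X}(y|x)Q_{\widehat S|Y}(\hat s|y)$ for some kernels $Q_{X|S}$, $Q_{\widehat S|Y}$; $Q_X$, $Q_{S,\widehat S}$ denote marginals. For $a\in(0,\infty)^{\mathcal S\times\widehat{\mathcal S}}$ let $\bar a(\hat s)=\sum_{s'}a(\hat s|s')P_S(s')$ and $\Phi(a)=\sum_{s,\hat s}a(\hat s|s)P_S(s)f\big(\bar a(\hat s)/a(\hat s|s)\big)$. For $b\in\mathbb R^{\mathcal X}$ with $b_Y(y):=\sum_{x'}P_{Y|X}(y|x')b(x')>0$ for all $y$, let $\Psi(b)=\sum_{x,y}b(x)P_{Y|X}(y|x)f\big(b_Y(y)/P_{Y|X}(y|x)\big)$. (On kernels/pmfs these equal the $f$-mutual informations of $(s,\hat s)\mapsto a(\hat s|s)P_S(s)$ and $(x,y)\mapsto b(x)P_{Y|X}(y|x)$.) $f$-mutual information: for $f$ convex on $(0,\infty)$, $f'(\infty)=\lim_{t\to\infty}f(t)/t$, and for a joint pmf $p(u,v)$ on a finite product set, $I_f(p)=\sum_{u,v}\phi(u,v)$ with $\phi=p(u,v)f(p(u)p(v)/p(u,v))$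 if $p(u,v)>0$, $\phi=p(u)p(v)f'(\infty)$ if $p(u,v)=0<p(u)p(v)$, $\phi=0$ if $p(u)p(v)=0$. $f$ has the saddle property if $f$ is convex on $(0,\infty)$ and, for all finite sets $\mathcal U,\mathcal V$ and every kernel $p(v|u)$, $p_U\mapsto I_f(p_U(u)p(v|u))$ is concave on the pmfs on $\mathcal U$. *)

theory Defs
  imports "HOL-Analysis.Analysis"
begin

definition is_pmf :: "('a::finite \<Rightarrow> real) \<Rightarrow> bool" where
  "is_pmf p \<longleftrightarrow> (\<forall>x. 0 \<le> p x) \<and> (\<Sum>x\<in>UNIV. p x) = 1"

definition is_kernel :: "('a::finite \<Rightarrow> 'b::finite \<Rightarrow> real) \<Rightarrow> bool" where
  "is_kernel K \<longleftrightarrow> (\<forall>u. is_pmf (K u))"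

text \<open>The set Q of joint pmfs P_S(s) Q(x|s) P(y|x) Q(shat|y); PYX x y = P_{Y|X}(y|x)\<close>
definition Qset :: "('s::finite \<Rightarrow> real) \<Rightarrow> ('x::finite \<Rightarrow> 'y::finite \<Rightarrow> real)
    \<Rightarrow> ('s \<times> 'x \<times> 'y \<times> 'h::finite \<Rightarrow> real) set" where
  "Qset PS PYX = {Q. \<exists>QXS QHY. is_kernel QXS \<and> is_kernel QHY \<and>
      Q = (\<lambda>(s,x,y,h). PS s * QXS s x * PYX x y * QHY y h)}"

definition marg_X :: "('s::finite \<times> 'x \<times> 'y::finite \<times> 'h::finite \<Rightarrow> real) \<Rightarrow> 'x \<Rightarrow> real" where
  "marg_X Q x = (\<Sum>s\<in>UNIV. \<Sum>y\<in>UNIV. \<Sum>h\<in>UNIV. Q (s,x,y,h))"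

definition marg_SH :: "('s \<times> 'x::finite \<times> 'y::finite \<times> 'h \<Rightarrow> real) \<Rightarrow> 's \<Rightarrow> 'h \<Rightarrow> real" where
  "marg_SH Q s h = (\<Sum>x\<in>UNIV. \<Sum>y\<in>UNIV. Q (s,x,y,h))"

text \<open>a s h stands for a(shat|s)\<close>
definition Phi :: "('s::finite \<Rightarrow> real) \<Rightarrow> (real \<Rightarrow> real) \<Rightarrow> ('s \<Rightarrow> 'h::finite \<Rightarrow> real) \<Rightarrow> real" where
  "Phi PS f a = (\<Sum>s\<in>UNIV. \<Sum>h\<in>UNIV.
      a s h * PS s * f ((\<Sum>s'\<in>UNIV. a s' h * PS s') / a s h))"

definition Psi :: "('x::finite \<Rightarrow> 'y::finite \<Rightarrow> real) \<Rightarrow> (real \<Rightarrow> real) \<Rightarrow> ('x \<Rightarrow> real) \<Rightarrow> real" where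
  "Psi PYX f b = (\<Sum>x\<in>UNIV. \<Sum>y\<in>UNIV.
      b x * PYX x y * f ((\<Sum>x'\<in>UNIV. PYX x' y * b x') / PYX x y))"

definition dPhi :: "('s::finite \<Rightarrow> real) \<Rightarrow> (real \<Rightarrow> real) \<Rightarrow> ('s \<Rightarrow> 'h::finite \<Rightarrow> real) \<Rightarrow> 's \<Rightarrow> 'h \<Rightarrow> real" where
  "dPhi PS f a s h = deriv (\<lambda>t. Phi PS f (a(s := (a s)(h := t)))) (a s h)"

definition dPsi :: "('x::finite \<Rightarrow> 'y::finite \<Rightarrow> real) \<Rightarrow> (real \<Rightarrow> real) \<Rightarrow> ('x \<Rightarrow> real) \<Rightarrow> 'x \<Rightarrow> real" where
  "dPsi PYX f b x = deriv (\<lambda>t. Psi PYX f (b(x := t))) (b x)"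

definition fprime_inf :: "(real \<Rightarrow> real) \<Rightarrow> ereal" where
  "fprime_inf f = Lim at_top (\<lambda>t. ereal (f t / t))"

definition fMI :: "(real \<Rightarrow> real) \<Rightarrow> 'u set \<Rightarrow> 'v set \<Rightarrow> ('u \<Rightarrow> 'v \<Rightarrow> real) \<Rightarrow> ereal" where
  "fMI f U V p = (\<Sum>u\<in>U. \<Sum>v\<in>V.
     (let pu = (\<Sum>v'\<in>V. p u v'); pv = (\<Sum>u'\<in>U. p u' v) in
      if 0 < p u v then ereal (p u v * f (pu * pv / p u v))
      else if 0 < pu * pv then ereal (pu * pv) * fprime_inf f
      else 0))"

text \<open>Saddle property. Finite sets U, V are taken as finite subsets of nat
  (any finite sets are in bijection with such, and I_f is invariant under relabelling).\<close>
definition saddle_property :: "(real \<Rightarrow> real) \<Rightarrow> bool" where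
  "saddle_property f \<longleftrightarrow> convex_on {0<..} f \<and>
    (\<forall>(U::nat set) (V::nat set) (k::nat \<Rightarrow> nat \<Rightarrow> real).
       finite U \<longrightarrow> finite V \<longrightarrow>
       (\<forall>u\<in>U. (\<forall>v\<in>V. 0 \<le> k u v) \<and> (\<Sum>v\<in>V. k u v) = 1) \<longrightarrow>
       (\<forall>p q \<theta>. (\<forall>u\<in>U. 0 \<le> p u) \<longrightarrow> (\<Sum>u\<in>U. p u) = 1 \<longrightarrow>
                 (\<forall>u\<in>U. 0 \<le> q u) \<longrightarrow> (\<Sum>u\<in>U. q u) = 1 \<longrightarrow>
                 0 \<le> \<theta> \<longrightarrow> \<theta> \<le> 1 \<longrightarrow>
          ereal \<theta> * fMI f U V (\<lambda>u v. p u * k u v)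
            + ereal (1 - \<theta>) * fMI f U V (\<lambda>u v. q u * k u v)
          \<le> fMI f U V (\<lambda>u v. (\<theta> * p u + (1 - \<theta>) * q u) * k u v)))"

end

theory Submission
  imports Defs
begin

text \<open>
  Every Q' in Qset is a cascade P_S(s) A'(x|s) P(y|x) B'(shat|y); write a' for its induced
  channel from S to Shat and b' for its X-marginal. The linear cost of Q' depends only on
  (a', b'), and for multipliers of the given form it equals
    lam (<b', grad Psi(b)> - <a', grad Phi(a)>) + (sum of nub b') + constant.
  When a' > 0 three inequalities show that (a, b) minimises this expression:
   (1) Psi is concave on pmfs (saddle property), so Psi(b') \<le> Psi(b) + <b' - b, grad Psi(b)>;
   (2) Phi is convex on positive kernels (perspective of a convex f), so
       Phi(a) + <a' - a, grad Phi(a)> \<le> Phi(a');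
   (3) data processing along the Markov chain S - X - Y - Shat gives Phi(a') \<le> Psi(b');
  together with complementary slackness lam (Psi(b) - Phi(a)) = 0 and nub \<ge> 0 = sum of nub b.
  The restriction a' > 0 is removed by mixing B' with the uniform kernel and letting the
  weight tend to 0. The file develops, in order: one-variable facts on convexity and limits;
  explicit gradients of Psi and Phi, identified with the coordinate derivatives dPsi and dPhi;
  convexity of Phi, concavity of Psi and the two tangent inequalities; the data processing
  inequality; the cascade bookkeeping and the cost; finally the theorem.
\<close>

lemma convex_on_01_above_tangent:
  fixes g :: "real \<Rightarrow> real"
  assumes cv: "convex_on {0..1} g" and d: "(g has_real_derivative D) (at 0)"
  shows "g 0 + D \<le> g 1"
proof -
  have lim: "((\<lambda>t. (g t - g 0) / (t - 0)) \<longlongrightarrow> D) (at_right 0)"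
    using d unfolding has_field_derivative_iff
    by (metis tendsto_within_subset top_greatest)
  have "eventually (\<lambda>t. t \<in> {0<..<1}) (at_right (0::real))"
    using eventually_at_right_field[of _ "0::real"] by (auto intro!: exI[of _ 1])
  then have ev: "eventually (\<lambda>t. (g t - g 0) / (t - 0) \<le> g 1 - g 0) (at_right 0)"
  proof (rule eventually_mono)
    fix t :: real assume t: "t \<in> {0<..<1}"
    have "g ((1 - t) *\<^sub>R 0 + t *\<^sub>R 1) \<le> (1 - t) * g 0 + t * g 1"
      using t by (intro convex_onD_Icc[OF cv]) auto
    then have "g t - g 0 \<le> t * (g 1 - g 0)" by (simp add: algebra_simps)
    then show "(g t - g 0) / (t - 0) \<le> g 1 - g 0" using t by (simp add: divide_le_eq mult.commute)
  qed
  have "D \<le> g 1 - g 0"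
    by (rule tendsto_upperbound[OF lim ev]) simp
  then show ?thesis by simp
qed

lemma le_of_le_convex_combinations:
  fixes x y c :: real
  assumes "\<And>e. 0 < e \<Longrightarrow> e < 1 \<Longrightarrow> x \<le> (1 - e) * y + e * c"
  shows "x \<le> y"
proof -
  have lim: "((\<lambda>e. (1 - e) * y + e * c) \<longlongrightarrow> (1 - 0) * y + 0 * c) (at_right 0)"
    by (intro tendsto_intros)
  have ev: "eventually (\<lambda>e. x \<le> (1 - e) * y + e * c) (at_right (0::real))"
    unfolding eventually_at_right_field using assms by (auto intro!: exI[of _ 1])
  show ?thesis using tendsto_lowerbound[OF lim ev] by simp
qed

lemma weighted_jensen:
  fixes f :: "real \<Rightarrow> real" and w r :: "'i \<Rightarrow> real"
  assumes cv: "convex_on {0<..} f" and fin: "finite I"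
    and w: "\<And>i. i \<in> I \<Longrightarrow> 0 \<le> w i" and r: "\<And>i. i \<in> I \<Longrightarrow> 0 < r i"
    and W: "0 < (\<Sum>i\<in>I. w i)"
  shows "(\<Sum>i\<in>I. w i) * f ((\<Sum>i\<in>I. w i * r i) / (\<Sum>i\<in>I. w i)) \<le> (\<Sum>i\<in>I. w i * f (r i))"
proof -
  define S where "S = (\<Sum>i\<in>I. w i)"
  have ne: "I \<noteq> {}" using W by auto
  have "f (\<Sum>i\<in>I. (w i / S) *\<^sub>R r i) \<le> (\<Sum>i\<in>I. (w i / S) * f (r i))"
    by (rule convex_on_sum[OF fin ne cv]) (use W w r in \<open>auto simp: S_def sum_divide_distrib[symmetric]\<close>)
  moreover have "(\<Sum>i\<in>I. (w i / S) *\<^sub>R r i) = (\<Sum>i\<in>I. w i * r i) / S"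
    by (simp add: sum_divide_distrib)
  moreover have "(\<Sum>i\<in>I. (w i / S) * f (r i)) = (\<Sum>i\<in>I. w i * f (r i)) / S"
    by (simp add: sum_divide_distrib)
  ultimately have "f ((\<Sum>i\<in>I. w i * r i) / S) \<le> (\<Sum>i\<in>I. w i * f (r i)) / S" by simp
  then show ?thesis using W unfolding S_def[symmetric] by (simp add: field_simps)
qed

lemma perspective_convex:
  fixes f :: "real \<Rightarrow> real" and v1 v2 u1 u2 t :: real
  assumes cv: "convex_on {0<..} f" and "0 < v1" "0 < v2" "0 < u1" "0 < u2" "0 \<le> t" "t \<le> 1"
  shows "((1-t) * v1 + t * v2) * f (((1-t) * u1 + t * u2) / ((1-t) * v1 + t * v2))
         \<le> (1-t) * (v1 * f (u1/v1)) + t * (v2 * f (u2/v2))"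
proof -
  define V where "V = (1-t) * v1 + t * v2"
  have V: "0 < V" using assms unfolding V_def
    by (cases "t = 0") (auto intro: add_nonneg_pos add_pos_nonneg)
  define \<alpha> where "\<alpha> = (1-t) * v1 / V"
  have \<alpha>: "0 \<le> \<alpha>" "\<alpha> \<le> 1" using assms V unfolding \<alpha>_def V_def by (auto simp: field_simps)
  have nz: "v1 \<noteq> 0" "v2 \<noteq> 0" "V \<noteq> 0" using assms V by auto
  have oa: "1 - \<alpha> = t * v2 / V" using nz unfolding \<alpha>_def by (simp add: V_def field_simps)
  have e1: "V * (1-\<alpha>) = t * v2" and e2: "V * \<alpha> = (1-t) * v1"
    using nz oa unfolding \<alpha>_def by simp_all
  have "(1-\<alpha>) *\<^sub>R (u2/v2) + \<alpha> *\<^sub>R (u1/v1) = t * u2 / V + (1-t) * u1 / V"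
    unfolding oa using nz by (simp add: \<alpha>_def)
  then have "((1-t) * u1 + t * u2) / V = (1-\<alpha>) *\<^sub>R (u2/v2) + \<alpha> *\<^sub>R (u1/v1)"
    by (simp add: add_divide_distrib)
  then have "f (((1-t) * u1 + t * u2) / V) \<le> (1-\<alpha>) * f (u2/v2) + \<alpha> * f (u1/v1)"
    using convex_onD[OF cv \<alpha>, of "u2/v2" "u1/v1"] assms by simp
  then have "V * f (((1-t) * u1 + t * u2) / V) \<le> V * ((1-\<alpha>) * f (u2/v2) + \<alpha> * f (u1/v1))"
    using V by (simp add: mult_left_mono)
  also have "\<dots> = (V * (1-\<alpha>)) * f (u2/v2) + (V * \<alpha>) * f (u1/v1)"
    by (simp add: distrib_left mult.assoc)
  also have "\<dots> = (1-t) * (v1 * f (u1/v1)) + t * (v2 * f (u2/v2))"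
    unfolding e1 e2 by (simp add: mult.assoc)
  finally show ?thesis unfolding V_def .
qed

lemma pmf_weighted_sum_pos:
  fixes p c :: "'a::finite \<Rightarrow> real"
  assumes "is_pmf p" "\<And>x. 0 < c x"
  shows "0 < (\<Sum>x\<in>UNIV. p x * c x)"
proof -
  have p0: "0 \<le> p x" for x using assms by (simp add: is_pmf_def)
  obtain x0 where "p x0 \<noteq> 0"
    using assms(1) unfolding is_pmf_def by (metis (full_types) sum.neutral zero_neq_one)
  then have "0 < p x0 * c x0" using p0[of x0] assms(2)[of x0] by (simp add: order_le_neq_trans)
  moreover have "p x0 * c x0 \<le> (\<Sum>x\<in>UNIV. p x * c x)"
    by (rule member_le_sum) (use p0 assms(2) in \<open>auto intro!: mult_nonneg_nonneg simp: less_imp_le\<close>)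
  ultimately show ?thesis by linarith
qed

definition Psi_grad :: "('x::finite \<Rightarrow> 'y::finite \<Rightarrow> real) \<Rightarrow> (real \<Rightarrow> real) \<Rightarrow> (real \<Rightarrow> real)
    \<Rightarrow> ('x \<Rightarrow> real) \<Rightarrow> 'x \<Rightarrow> real" where
  "Psi_grad PYX f f' b x = (\<Sum>y\<in>UNIV. PYX x y * f ((\<Sum>x'\<in>UNIV. PYX x' y * b x') / PYX x y))
     + (\<Sum>x1\<in>UNIV. \<Sum>y\<in>UNIV. b x1 * PYX x y * f' ((\<Sum>x'\<in>UNIV. PYX x' y * b x') / PYX x1 y))"

lemma Psi_grad_pairing:
  fixes PYX :: "'x::finite \<Rightarrow> 'y::finite \<Rightarrow> real" and b d :: "'x \<Rightarrow> real"
  assumes Ppos: "\<forall>x y. 0 < PYX x y"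
  defines "B \<equiv> \<lambda>y. \<Sum>x'\<in>UNIV. PYX x' y * b x'" and "D \<equiv> \<lambda>y. \<Sum>x'\<in>UNIV. PYX x' y * d x'"
  shows "(\<Sum>x1\<in>UNIV. \<Sum>y\<in>UNIV. d x1 * PYX x1 y * f (B y / PYX x1 y)
            + b x1 * PYX x1 y * (f' (B y / PYX x1 y) * (D y / PYX x1 y)))
         = (\<Sum>x\<in>UNIV. d x * Psi_grad PYX f f' b x)"
proof -
  define C where "C x1 y x = b x1 * PYX x y * f' (B y / PYX x1 y)" for x1 y x
  have e1: "b x1 * PYX x1 y * (f' (B y / PYX x1 y) * (D y / PYX x1 y)) = (\<Sum>x\<in>UNIV. d x * C x1 y x)"
    for x1 y
  proof -
    have "PYX x1 y \<noteq> 0" using Ppos by (metis less_irrefl)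
    then have "b x1 * PYX x1 y * (f' (B y / PYX x1 y) * (D y / PYX x1 y)) = b x1 * f' (B y / PYX x1 y) * D y"
      by simp
    then show ?thesis by (simp add: D_def C_def sum_distrib_left ac_simps)
  qed
  have s1: "(\<Sum>x1\<in>UNIV. \<Sum>y\<in>UNIV. d x1 * PYX x1 y * f (B y / PYX x1 y))
      = (\<Sum>x\<in>UNIV. d x * (\<Sum>y\<in>UNIV. PYX x y * f (B y / PYX x y)))"
    by (simp add: sum_distrib_left mult.assoc)
  have "(\<Sum>x1\<in>UNIV. \<Sum>y\<in>UNIV. \<Sum>x\<in>UNIV. d x * C x1 y x)
      = (\<Sum>x1\<in>UNIV. \<Sum>x\<in>UNIV. \<Sum>y\<in>UNIV. d x * C x1 y x)"
    by (rule sum.cong[OF refl], rule sum.swap)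
  also have "\<dots> = (\<Sum>x\<in>UNIV. d x * (\<Sum>x1\<in>UNIV. \<Sum>y\<in>UNIV. C x1 y x))"
    by (subst sum.swap) (simp add: sum_distrib_left)
  finally have s2: "(\<Sum>x1\<in>UNIV. \<Sum>y\<in>UNIV. \<Sum>x\<in>UNIV. d x * C x1 y x)
      = (\<Sum>x\<in>UNIV. d x * (\<Sum>x1\<in>UNIV. \<Sum>y\<in>UNIV. C x1 y x))" .
  have B: "(\<Sum>x'\<in>UNIV. PYX x' y * b x') = B y" for y by (simp add: B_def)
  show ?thesis
    unfolding e1 sum.distrib s1 s2 unfolding Psi_grad_def B C_def by (simp add: distrib_left sum.distrib)
qed

lemma Psi_directional_derivative:
  fixes PYX :: "'x::finite \<Rightarrow> 'y::finite \<Rightarrow> real"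
  assumes fd: "\<And>z. z > 0 \<Longrightarrow> (f has_real_derivative f' z) (at z)"
    and Ppos: "\<forall>x y. 0 < PYX x y" and Bpos: "\<forall>y. 0 < (\<Sum>x'\<in>UNIV. PYX x' y * b x')"
  shows "((\<lambda>t. Psi PYX f (\<lambda>x. b x + t * d x)) has_real_derivative
           (\<Sum>x\<in>UNIV. d x * Psi_grad PYX f f' b x)) (at 0)"
proof -
  define B where "B y = (\<Sum>x'\<in>UNIV. PYX x' y * b x')" for y
  define D where "D y = (\<Sum>x'\<in>UNIV. PYX x' y * d x')" for y
  have Bt: "(\<Sum>x'\<in>UNIV. PYX x' y * (b x' + t * d x')) = B y + t * D y" for y t
    by (simp add: B_def D_def algebra_simps sum.distrib sum_distrib_left)
  have "((\<lambda>t. (b x1 + t * d x1) * PYX x1 y * f ((B y + t * D y) / PYX x1 y)) has_real_derivative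
      (d x1 * PYX x1 y * f (B y / PYX x1 y)
       + b x1 * PYX x1 y * (f' (B y / PYX x1 y) * (D y / PYX x1 y)))) (at 0)" for x1 y
  proof -
    have g: "((\<lambda>t. (B y + t * D y) / PYX x1 y) has_real_derivative D y / PYX x1 y) (at 0)"
      using Ppos[rule_format, of x1 y] by (auto intro!: derivative_eq_intros)
    have "B y / PYX x1 y > 0" using Bpos Ppos by (simp add: B_def)
    then have c: "((\<lambda>t. f ((B y + t * D y) / PYX x1 y)) has_real_derivative
        f' (B y / PYX x1 y) * (D y / PYX x1 y)) (at 0)"
      using DERIV_chain2[OF fd g] by simp
    show ?thesis
      by (rule derivative_eq_intros c | simp)+
  qed
  then have "((\<lambda>t. Psi PYX f (\<lambda>x. b x + t * d x)) has_real_derivative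
     (\<Sum>x1\<in>UNIV. \<Sum>y\<in>UNIV. d x1 * PYX x1 y * f (B y / PYX x1 y)
        + b x1 * PYX x1 y * (f' (B y / PYX x1 y) * (D y / PYX x1 y)))) (at 0)"
    unfolding Psi_def Bt by (intro DERIV_sum)
  then show ?thesis
    using Psi_grad_pairing[OF Ppos, where b=b and d=d and f=f and f'=f'] unfolding B_def[abs_def] D_def[abs_def] by simp
qed

lemma dPsi_eq_Psi_grad:
  fixes PYX :: "'x::finite \<Rightarrow> 'y::finite \<Rightarrow> real"
  assumes fd: "\<And>z. z > 0 \<Longrightarrow> (f has_real_derivative f' z) (at z)"
    and Ppos: "\<forall>x y. 0 < PYX x y" and Bpos: "\<forall>y. 0 < (\<Sum>x'\<in>UNIV. PYX x' y * b x')"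
  shows "dPsi PYX f b x = Psi_grad PYX f f' b x"
proof -
  define e where "e x' = (if x' = x then 1 else (0::real))" for x'
  have "(\<Sum>x'\<in>UNIV. e x' * Psi_grad PYX f f' b x') = Psi_grad PYX f f' b x"
    unfolding e_def by (simp add: if_distrib[where f="\<lambda>z. z * _"] cong: if_cong)
  then have "((\<lambda>u. Psi PYX f (\<lambda>x'. b x' + u * e x')) has_real_derivative Psi_grad PYX f f' b x) (at 0)"
    using Psi_directional_derivative[OF fd Ppos Bpos, of e] by simp
  moreover have "(\<lambda>u. Psi PYX f (b(x := u + b x))) = (\<lambda>u. Psi PYX f (\<lambda>x'. b x' + u * e x'))"
    by (rule ext, rule arg_cong[where f="Psi PYX f"]) (auto simp: e_def)
  ultimately have "((\<lambda>t. Psi PYX f (b(x := t))) has_real_derivative Psi_grad PYX f f' b x) (at (0 + b x))"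
    using DERIV_shift[of "\<lambda>t. Psi PYX f (b(x := t))" _ 0 "b x"] by simp
  then show ?thesis
    unfolding dPsi_def by (intro DERIV_imp_deriv) simp
qed

definition Phi_grad :: "('s::finite \<Rightarrow> real) \<Rightarrow> (real \<Rightarrow> real) \<Rightarrow> (real \<Rightarrow> real)
    \<Rightarrow> ('s \<Rightarrow> 'h::finite \<Rightarrow> real) \<Rightarrow> 's \<Rightarrow> 'h \<Rightarrow> real" where
  "Phi_grad PS f f' a s0 h0 = PS s0 * (f ((\<Sum>s'\<in>UNIV. a s' h0 * PS s') / a s0 h0)
       - (\<Sum>s'\<in>UNIV. a s' h0 * PS s') / a s0 h0 * f' ((\<Sum>s'\<in>UNIV. a s' h0 * PS s') / a s0 h0)
       + (\<Sum>s\<in>UNIV. PS s * f' ((\<Sum>s'\<in>UNIV. a s' h0 * PS s') / a s h0)))"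

lemma Phi_grad_pairing:
  fixes PS :: "'s::finite \<Rightarrow> real" and a d :: "'s \<Rightarrow> 'h::finite \<Rightarrow> real"
  defines "A \<equiv> \<lambda>h. \<Sum>s'\<in>UNIV. a s' h * PS s'" and "D \<equiv> \<lambda>h. \<Sum>s'\<in>UNIV. d s' h * PS s'"
  shows "(\<Sum>s\<in>UNIV. \<Sum>h\<in>UNIV. d s h * PS s * f (A h / a s h)
            + PS s * f' (A h / a s h) * (D h - A h / a s h * d s h))
         = (\<Sum>s\<in>UNIV. \<Sum>h\<in>UNIV. d s h * Phi_grad PS f f' a s h)"
proof -
  define r where "r s h = A h / a s h" for s h
  have e1: "d s h * PS s * f (r s h) + PS s * f' (r s h) * (D h - r s h * d s h)
     = d s h * (PS s * (f (r s h) - r s h * f' (r s h)))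
       + (\<Sum>s0\<in>UNIV. d s0 h * (PS s0 * (PS s * f' (r s h))))" for s h
    by (simp add: D_def sum_distrib_left sum_distrib_right algebra_simps)
  have "(\<Sum>s\<in>UNIV. \<Sum>h\<in>UNIV. \<Sum>s0\<in>UNIV. d s0 h * (PS s0 * (PS s * f' (r s h))))
      = (\<Sum>h\<in>UNIV. \<Sum>s\<in>UNIV. \<Sum>s0\<in>UNIV. d s0 h * (PS s0 * (PS s * f' (r s h))))"
    by (rule sum.swap)
  also have "\<dots> = (\<Sum>h\<in>UNIV. \<Sum>s0\<in>UNIV. \<Sum>s\<in>UNIV. d s0 h * (PS s0 * (PS s * f' (r s h))))"
    by (rule sum.cong[OF refl], rule sum.swap)
  also have "\<dots> = (\<Sum>s0\<in>UNIV. \<Sum>h\<in>UNIV. d s0 h * (PS s0 * (\<Sum>s\<in>UNIV. PS s * f' (r s h))))"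
    by (subst sum.swap) (simp add: sum_distrib_left)
  finally have s2: "(\<Sum>s\<in>UNIV. \<Sum>h\<in>UNIV. \<Sum>s0\<in>UNIV. d s0 h * (PS s0 * (PS s * f' (r s h))))
      = (\<Sum>s0\<in>UNIV. \<Sum>h\<in>UNIV. d s0 h * (PS s0 * (\<Sum>s\<in>UNIV. PS s * f' (r s h))))" .
  have A: "(\<Sum>s'\<in>UNIV. a s' h * PS s') = A h" for h by (simp add: A_def)
  show ?thesis
    unfolding r_def[symmetric] e1 sum.distrib s2 unfolding Phi_grad_def A r_def
    by (simp add: distrib_left sum.distrib)
qed

lemma Phi_directional_derivative:
  fixes PS :: "'s::finite \<Rightarrow> real" and a d :: "'s \<Rightarrow> 'h::finite \<Rightarrow> real"
  assumes fd: "\<And>z. z > 0 \<Longrightarrow> (f has_real_derivative f' z) (at z)"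
    and PSpos: "\<forall>s. 0 < PS s" and apos: "\<forall>s h. 0 < a s h"
  shows "((\<lambda>t. Phi PS f (\<lambda>s h. a s h + t * d s h)) has_real_derivative
           (\<Sum>s\<in>UNIV. \<Sum>h\<in>UNIV. d s h * Phi_grad PS f f' a s h)) (at 0)"
proof -
  define A where "A h = (\<Sum>s'\<in>UNIV. a s' h * PS s')" for h
  define D where "D h = (\<Sum>s'\<in>UNIV. d s' h * PS s')" for h
  have At: "(\<Sum>s'\<in>UNIV. (a s' h + t * d s' h) * PS s') = A h + t * D h" for h t
    by (simp add: A_def D_def algebra_simps sum.distrib sum_distrib_left)
  have "((\<lambda>t. (a s h + t * d s h) * PS s * f ((A h + t * D h) / (a s h + t * d s h)))
      has_real_derivative (d s h * PS s * f (A h / a s h)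
         + PS s * f' (A h / a s h) * (D h - A h / a s h * d s h))) (at 0)" for s h
  proof -
    have ne: "a s h \<noteq> 0" using apos by (metis less_irrefl)
    have g: "((\<lambda>t. (A h + t * D h) / (a s h + t * d s h)) has_real_derivative
        (D h - A h / a s h * d s h) / a s h) (at 0)"
      by (rule DERIV_cong, (rule derivative_eq_intros refl | simp add: ne)+) (simp add: field_simps ne)
    have "A h / a s h > 0"
      unfolding A_def using PSpos apos by (intro divide_pos_pos sum_pos) auto
    then have c: "((\<lambda>t. f ((A h + t * D h) / (a s h + t * d s h))) has_real_derivative
        f' (A h / a s h) * ((D h - A h / a s h * d s h) / a s h)) (at 0)"
      using DERIV_chain2[OF fd g] by simp
    show ?thesis
      by (rule DERIV_cong, (rule derivative_eq_intros c refl | simp)+) (simp add: field_simps ne)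
  qed
  then have "((\<lambda>t. Phi PS f (\<lambda>s h. a s h + t * d s h)) has_real_derivative
     (\<Sum>s\<in>UNIV. \<Sum>h\<in>UNIV. d s h * PS s * f (A h / a s h)
        + PS s * f' (A h / a s h) * (D h - A h / a s h * d s h))) (at 0)"
    unfolding Phi_def At by (intro DERIV_sum)
  then show ?thesis
    using Phi_grad_pairing[where d=d and PS=PS and f=f and a=a and f'=f'] unfolding A_def[abs_def] D_def[abs_def] by simp
qed

lemma dPhi_eq_Phi_grad:
  fixes PS :: "'s::finite \<Rightarrow> real" and a :: "'s \<Rightarrow> 'h::finite \<Rightarrow> real"
  assumes fd: "\<And>z. z > 0 \<Longrightarrow> (f has_real_derivative f' z) (at z)"
    and PSpos: "\<forall>s. 0 < PS s" and apos: "\<forall>s h. 0 < a s h"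
  shows "dPhi PS f a s h = Phi_grad PS f f' a s h"
proof -
  define e where "e s' h' = (if s' = s \<and> h' = h then 1 else (0::real))" for s' h'
  have "e s' h' * Phi_grad PS f f' a s' h'
      = (if h' = h then (if s' = s then Phi_grad PS f f' a s h else 0) else 0)" for s' h'
    by (simp add: e_def)
  then have "(\<Sum>s'\<in>UNIV. \<Sum>h'\<in>UNIV. e s' h' * Phi_grad PS f f' a s' h') = Phi_grad PS f f' a s h"
    by simp
  then have "((\<lambda>u. Phi PS f (\<lambda>s' h'. a s' h' + u * e s' h')) has_real_derivative
      Phi_grad PS f f' a s h) (at 0)"
    using Phi_directional_derivative[OF fd PSpos apos, of e] by simp
  moreover have "(\<lambda>u. Phi PS f (a(s := (a s)(h := u + a s h))))
      = (\<lambda>u. Phi PS f (\<lambda>s' h'. a s' h' + u * e s' h'))"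
    by (rule ext, rule arg_cong[where f="Phi PS f"]) (auto simp: e_def fun_eq_iff)
  ultimately have "((\<lambda>t. Phi PS f (a(s := (a s)(h := t)))) has_real_derivative
      Phi_grad PS f f' a s h) (at (0 + a s h))"
    using DERIV_shift[of "\<lambda>t. Phi PS f (a(s := (a s)(h := t)))" _ 0 "a s h"] by simp
  then show ?thesis
    unfolding dPhi_def by (intro DERIV_imp_deriv) simp
qed

text \<open>Phi is convex on kernels with positive entries (termwise perspective convexity).\<close>
lemma Phi_convex:
  fixes f :: "real \<Rightarrow> real" and PS :: "'s::finite \<Rightarrow> real" and ax ay :: "'s \<Rightarrow> 'h::finite \<Rightarrow> real"
  assumes cv: "convex_on {0<..} f" and PSpos: "\<forall>s. 0 < PS s"
    and axp: "\<forall>s h. 0 < ax s h" and ayp: "\<forall>s h. 0 < ay s h" and t: "0 \<le> t" "t \<le> 1"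
  shows "Phi PS f (\<lambda>s h. (1-t) * ax s h + t * ay s h) \<le> (1-t) * Phi PS f ax + t * Phi PS f ay"
proof -
  have A: "(\<Sum>s'\<in>UNIV. ((1-t) * ax s' h + t * ay s' h) * PS s')
      = (1-t) * (\<Sum>s'\<in>UNIV. ax s' h * PS s') + t * (\<Sum>s'\<in>UNIV. ay s' h * PS s')" for h
  proof -
    have "((1-t) * ax s' h + t * ay s' h) * PS s' = (1-t) * (ax s' h * PS s') + t * (ay s' h * PS s')" for s'
      by (simp add: algebra_simps)
    then show ?thesis by (simp add: sum.distrib sum_distrib_left)
  qed
  have Apos: "0 < (\<Sum>s'\<in>UNIV. c s' h * PS s')" if "\<forall>s h. 0 < c s h" for c :: "'s \<Rightarrow> 'h \<Rightarrow> real" and h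
    using that PSpos by (intro sum_pos) auto
  have Phi_alt: "Phi PS f c = (\<Sum>s\<in>UNIV. \<Sum>h\<in>UNIV. PS s * (c s h * f ((\<Sum>s'\<in>UNIV. c s' h * PS s') / c s h)))"
    for c :: "'s \<Rightarrow> 'h \<Rightarrow> real"
    unfolding Phi_def by (simp add: mult.commute mult.left_commute mult.assoc)
  have "Phi PS f (\<lambda>s h. (1-t) * ax s h + t * ay s h)
     = (\<Sum>s\<in>UNIV. \<Sum>h\<in>UNIV. PS s * (((1-t) * ax s h + t * ay s h)
         * f (((1-t) * (\<Sum>s'\<in>UNIV. ax s' h * PS s') + t * (\<Sum>s'\<in>UNIV. ay s' h * PS s'))
              / ((1-t) * ax s h + t * ay s h))))"
    unfolding Phi_alt A ..
  also have "\<dots> \<le> (\<Sum>s\<in>UNIV. \<Sum>h\<in>UNIV. PS s * ((1-t) * (ax s h * f ((\<Sum>s'\<in>UNIV. ax s' h * PS s') / ax s h))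
                   + t * (ay s h * f ((\<Sum>s'\<in>UNIV. ay s' h * PS s') / ay s h))))"
    using axp ayp Apos[OF axp] Apos[OF ayp] t PSpos
    by (intro sum_mono mult_left_mono perspective_convex[OF cv]) (auto intro: less_imp_le)
  also have "\<dots> = (1 - t) * Phi PS f ax + t * Phi PS f ay"
    unfolding Phi_alt by (simp only: distrib_left sum.distrib sum_distrib_left mult.left_commute)
  finally show ?thesis .
qed

lemma Phi_tangent:
  fixes PS :: "'s::finite \<Rightarrow> real" and a a' :: "'s \<Rightarrow> 'h::finite \<Rightarrow> real"
  assumes fd: "\<And>z. z > 0 \<Longrightarrow> (f has_real_derivative f' z) (at z)"
    and cv: "convex_on {0<..} f" and PSpos: "\<forall>s. 0 < PS s"
    and apos: "\<forall>s h. 0 < a s h" and a'pos: "\<forall>s h. 0 < a' s h"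
  shows "Phi PS f a + (\<Sum>s\<in>UNIV. \<Sum>h\<in>UNIV. (a' s h - a s h) * dPhi PS f a s h) \<le> Phi PS f a'"
proof -
  define seg where "seg t s h = a s h + t * (a' s h - a s h)" for t s h
  define g where "g t = Phi PS f (seg t)" for t
  have seg_pos: "\<forall>s h. 0 < seg t s h" if "t \<in> {0..1}" for t
  proof (intro allI)
    fix s h
    have "seg t s h = (1 - t) * a s h + t * a' s h" by (simp add: seg_def algebra_simps)
    moreover have "0 < (1 - t) * a s h + t * a' s h"
    proof (cases "t = 0")
      case False
      then have "0 < t * a' s h" using that a'pos by simp
      moreover have "0 \<le> (1 - t) * a s h" using that apos by (simp add: less_imp_le)
      ultimately show ?thesis by linarith
    qed (use apos in simp)
    ultimately show "0 < seg t s h" by simp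
  qed
  have grad: "dPhi PS f a s h = Phi_grad PS f f' a s h" for s h
    by (rule dPhi_eq_Phi_grad[OF fd PSpos apos])
  have "convex_on {0..1} g"
  proof (rule convex_onI)
    fix t x y :: real assume t: "0 < t" "t < 1" and xy: "x \<in> {0..1}" "y \<in> {0..1}"
    have "seg ((1 - t) *\<^sub>R x + t *\<^sub>R y) = (\<lambda>s h. (1 - t) * seg x s h + t * seg y s h)"
      by (simp add: seg_def fun_eq_iff algebra_simps)
    then show "g ((1 - t) *\<^sub>R x + t *\<^sub>R y) \<le> (1 - t) * g x + t * g y"
      unfolding g_def using Phi_convex[OF cv PSpos seg_pos[OF xy(1)] seg_pos[OF xy(2)]] t by simp
  qed simp
  moreover have "(g has_real_derivative (\<Sum>s\<in>UNIV. \<Sum>h\<in>UNIV. (a' s h - a s h) * dPhi PS f a s h)) (at 0)"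
    unfolding g_def seg_def grad by (rule Phi_directional_derivative[OF fd PSpos apos])
  ultimately have "g 0 + (\<Sum>s\<in>UNIV. \<Sum>h\<in>UNIV. (a' s h - a s h) * dPhi PS f a s h) \<le> g 1"
    by (rule convex_on_01_above_tangent)
  then show ?thesis by (simp add: g_def seg_def[abs_def])
qed

lemma fMI_eq_Psi:
  fixes PYX :: "'x::finite \<Rightarrow> 'y::finite \<Rightarrow> real" and p :: "'x \<Rightarrow> real"
  assumes K: "is_kernel PYX" and Ppos: "\<forall>x y. 0 < PYX x y" and pm: "is_pmf p"
  shows "fMI f (range (to_nat::'x\<Rightarrow>nat)) (range (to_nat::'y\<Rightarrow>nat))
           (\<lambda>u v. p (from_nat u) * PYX (from_nat u) (from_nat v)) = ereal (Psi PYX f p)"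
proof -
  have Ksum: "(\<Sum>y\<in>UNIV. PYX x y) = 1" for x using K by (simp add: is_kernel_def is_pmf_def)
  have p0: "0 \<le> p x" for x using pm by (simp add: is_pmf_def)
  have fMI_term: "(let pu = (\<Sum>y'\<in>UNIV. p x * PYX x y'); pv = (\<Sum>x'\<in>UNIV. p x' * PYX x' y) in
      if 0 < p x * PYX x y then ereal (p x * PYX x y * f (pu * pv / (p x * PYX x y)))
      else if 0 < pu * pv then ereal (pu * pv) * fprime_inf f else 0)
    = ereal (p x * PYX x y * f ((\<Sum>x'\<in>UNIV. PYX x' y * p x') / PYX x y))" for x y
  proof -
    have pu: "(\<Sum>y'\<in>UNIV. p x * PYX x y') = p x" by (simp add: sum_distrib_left[symmetric] Ksum)
    have pv: "(\<Sum>x'\<in>UNIV. p x' * PYX x' y) = (\<Sum>x'\<in>UNIV. PYX x' y * p x')" by (simp add: mult.commute)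
    show ?thesis
    proof (cases "p x = 0")
      case False
      then have "0 < p x" using p0[of x] by simp
      then show ?thesis using Ppos[rule_format, of x y] unfolding pu pv Let_def by simp
    qed (simp add: pu Let_def)
  qed
  show ?thesis
    unfolding fMI_def by (simp add: sum.reindex inj_on_def fMI_term Psi_def)
qed

lemma Psi_concave:
  fixes PYX :: "'x::finite \<Rightarrow> 'y::finite \<Rightarrow> real" and p q :: "'x \<Rightarrow> real"
  assumes sad: "saddle_property f" and K: "is_kernel PYX" and Ppos: "\<forall>x y. 0 < PYX x y"
    and pm: "is_pmf p" and qm: "is_pmf q" and th: "0 \<le> \<theta>" "\<theta> \<le> 1"
  shows "\<theta> * Psi PYX f p + (1 - \<theta>) * Psi PYX f q \<le> Psi PYX f (\<lambda>x. \<theta> * p x + (1 - \<theta>) * q x)"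
proof -
  define U where "U = range (to_nat::'x\<Rightarrow>nat)"
  define V where "V = range (to_nat::'y\<Rightarrow>nat)"
  define k where "k u v = PYX (from_nat u) (from_nat v)" for u v
  have rm: "is_pmf (\<lambda>x. \<theta> * p x + (1 - \<theta>) * q x)"
    using pm qm th by (auto simp: is_pmf_def sum.distrib sum_distrib_left[symmetric])
  have fin: "finite U" "finite V" unfolding U_def V_def by auto
  have kk: "\<forall>u\<in>U. (\<forall>v\<in>V. 0 \<le> k u v) \<and> (\<Sum>v\<in>V. k u v) = 1"
    using K Ppos
    by (auto simp: U_def V_def k_def sum.reindex inj_on_def is_kernel_def is_pmf_def intro: less_imp_le)
  have pmf_U: "\<forall>u\<in>U. 0 \<le> r (from_nat u)" "(\<Sum>u\<in>U. r (from_nat u)) = 1" if "is_pmf r" for r :: "'x \<Rightarrow> real"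
    using that by (auto simp: U_def sum.reindex inj_on_def is_pmf_def)
  have FM: "fMI f U V (\<lambda>u v. r (from_nat u) * k u v) = ereal (Psi PYX f r)" if "is_pmf r" for r
    unfolding U_def V_def k_def by (rule fMI_eq_Psi[OF K Ppos that])
  have "ereal \<theta> * fMI f U V (\<lambda>u v. p (from_nat u) * k u v)
          + ereal (1 - \<theta>) * fMI f U V (\<lambda>u v. q (from_nat u) * k u v)
        \<le> fMI f U V (\<lambda>u v. (\<theta> * p (from_nat u) + (1 - \<theta>) * q (from_nat u)) * k u v)"
    by (rule sad[unfolded saddle_property_def, THEN conjunct2, rule_format, OF fin])
       (use kk pmf_U[OF pm] pmf_U[OF qm] th in auto)
  then have "ereal \<theta> * ereal (Psi PYX f p) + ereal (1 - \<theta>) * ereal (Psi PYX f q)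
        \<le> ereal (Psi PYX f (\<lambda>x. \<theta> * p x + (1 - \<theta>) * q x))"
    using FM[OF pm] FM[OF qm] FM[OF rm] by simp
  then show ?thesis by simp
qed

lemma Psi_tangent:
  fixes PYX :: "'x::finite \<Rightarrow> 'y::finite \<Rightarrow> real" and b b' :: "'x \<Rightarrow> real"
  assumes fd: "\<And>z. z > 0 \<Longrightarrow> (f has_real_derivative f' z) (at z)"
    and sad: "saddle_property f" and K: "is_kernel PYX" and Ppos: "\<forall>x y. 0 < PYX x y"
    and bm: "is_pmf b" and b'm: "is_pmf b'"
  shows "Psi PYX f b' \<le> Psi PYX f b + (\<Sum>x\<in>UNIV. (b' x - b x) * dPsi PYX f b x)"
proof -
  define seg where "seg t x = b x + t * (b' x - b x)" for t x
  define g where "g t = - Psi PYX f (seg t)" for t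
  have seg_pmf: "is_pmf (seg t)" if "t \<in> {0..1}" for t
  proof -
    have "seg t = (\<lambda>x. (1 - t) * b x + t * b' x)" by (simp add: seg_def fun_eq_iff algebra_simps)
    then show ?thesis using bm b'm that
      by (auto simp: is_pmf_def sum.distrib sum_distrib_left[symmetric] intro!: add_nonneg_nonneg)
  qed
  have Bpos: "\<forall>y. 0 < (\<Sum>x'\<in>UNIV. PYX x' y * b x')"
    using pmf_weighted_sum_pos[OF bm, of "\<lambda>x. PYX x _"] Ppos by (simp add: mult.commute)
  have grad: "dPsi PYX f b x = Psi_grad PYX f f' b x" for x
    by (rule dPsi_eq_Psi_grad[OF fd Ppos Bpos])
  have "convex_on {0..1} g"
  proof (rule convex_onI)
    fix t x y :: real assume t: "0 < t" "t < 1" and xy: "x \<in> {0..1}" "y \<in> {0..1}"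
    have "seg ((1 - t) *\<^sub>R x + t *\<^sub>R y) = (\<lambda>z. (1 - t) * seg x z + (1 - (1 - t)) * seg y z)"
      by (simp add: seg_def fun_eq_iff algebra_simps)
    then show "g ((1 - t) *\<^sub>R x + t *\<^sub>R y) \<le> (1 - t) * g x + t * g y"
      unfolding g_def using Psi_concave[OF sad K Ppos seg_pmf[OF xy(1)] seg_pmf[OF xy(2)], of "1 - t"] t
      by simp
  qed simp
  moreover have "(g has_real_derivative - (\<Sum>x\<in>UNIV. (b' x - b x) * dPsi PYX f b x)) (at 0)"
    unfolding g_def seg_def grad
    by (intro derivative_intros Psi_directional_derivative[OF fd Ppos Bpos])
  ultimately have "g 0 + - (\<Sum>x\<in>UNIV. (b' x - b x) * dPsi PYX f b x) \<le> g 1"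
    by (rule convex_on_01_above_tangent)
  then show ?thesis by (simp add: g_def seg_def[abs_def])
qed

definition cascade_joint :: "('s::finite \<Rightarrow> real) \<Rightarrow> ('s \<Rightarrow> 'x::finite \<Rightarrow> real)
    \<Rightarrow> ('x \<Rightarrow> 'y::finite \<Rightarrow> real) \<Rightarrow> ('y \<Rightarrow> 'h::finite \<Rightarrow> real) \<Rightarrow> 's \<times> 'x \<times> 'y \<times> 'h \<Rightarrow> real" where
  "cascade_joint PS A PYX B = (\<lambda>(s,x,y,h). PS s * A s x * PYX x y * B y h)"

definition induced_channel :: "('x::finite \<Rightarrow> 'y::finite \<Rightarrow> real) \<Rightarrow> ('s \<Rightarrow> 'x \<Rightarrow> real)
    \<Rightarrow> ('y \<Rightarrow> 'h \<Rightarrow> real) \<Rightarrow> 's \<Rightarrow> 'h \<Rightarrow> real" where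
  "induced_channel PYX A B s h = (\<Sum>x\<in>UNIV. A s x * (\<Sum>y\<in>UNIV. PYX x y * B y h))"

definition input_marginal :: "('s::finite \<Rightarrow> real) \<Rightarrow> ('s \<Rightarrow> 'x \<Rightarrow> real) \<Rightarrow> 'x \<Rightarrow> real" where
  "input_marginal PS A x = (\<Sum>s\<in>UNIV. PS s * A s x)"

text \<open>Joint pmf of (S, Y) and the f-information between S and Y; it sits between Phi and Psi
  in the data processing inequality for the Markov chain S - X - Y - Shat.\<close>
definition SY_joint :: "('s::finite \<Rightarrow> real) \<Rightarrow> ('s \<Rightarrow> 'x::finite \<Rightarrow> real)
    \<Rightarrow> ('x \<Rightarrow> 'y \<Rightarrow> real) \<Rightarrow> 's \<Rightarrow> 'y \<Rightarrow> real" where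
  "SY_joint PS A PYX s y = PS s * (\<Sum>x\<in>UNIV. A s x * PYX x y)"

definition fI_SY :: "(real \<Rightarrow> real) \<Rightarrow> ('s::finite \<Rightarrow> real) \<Rightarrow> ('s \<Rightarrow> 'x::finite \<Rightarrow> real)
    \<Rightarrow> ('x \<Rightarrow> 'y::finite \<Rightarrow> real) \<Rightarrow> real" where
  "fI_SY f PS A PYX = (\<Sum>s\<in>UNIV. \<Sum>y\<in>UNIV. SY_joint PS A PYX s y
      * f (PS s * (\<Sum>s'\<in>UNIV. SY_joint PS A PYX s' y) / SY_joint PS A PYX s y))"

lemma SY_joint_pos:
  assumes "\<forall>s. 0 < PS s" "is_kernel A" "\<forall>x y. 0 < PYX x y"
  shows "0 < SY_joint PS A PYX s y"
  using assms pmf_weighted_sum_pos[of "A s" "\<lambda>x. PYX x y"]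
  by (simp add: SY_joint_def is_kernel_def)

lemma SY_joint_output_marginal:
  "(\<Sum>s\<in>UNIV. SY_joint PS A PYX s y) = (\<Sum>x\<in>UNIV. PYX x y * input_marginal PS A x)"
proof -
  have "(\<Sum>x\<in>UNIV. PYX x y * input_marginal PS A x) = (\<Sum>x\<in>UNIV. \<Sum>s\<in>UNIV. PS s * (A s x * PYX x y))"
    by (simp add: input_marginal_def sum_distrib_left mult_ac)
  also have "\<dots> = (\<Sum>s\<in>UNIV. SY_joint PS A PYX s y)"
    by (subst sum.swap) (simp add: SY_joint_def sum_distrib_left)
  finally show ?thesis ..
qed

lemma induced_channel_from_SY_joint:
  "induced_channel PYX A B s h * PS s = (\<Sum>y\<in>UNIV. SY_joint PS A PYX s y * B y h)"
proof -
  have "induced_channel PYX A B s h * PS s = (\<Sum>x\<in>UNIV. \<Sum>y\<in>UNIV. (PS s * (A s x * PYX x y)) * B y h)"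
    by (simp add: induced_channel_def sum_distrib_left sum_distrib_right mult_ac)
  also have "\<dots> = (\<Sum>y\<in>UNIV. SY_joint PS A PYX s y * B y h)"
    by (subst sum.swap) (simp add: SY_joint_def sum_distrib_left sum_distrib_right)
  finally show ?thesis .
qed

lemma data_processing_output:
  fixes f :: "real \<Rightarrow> real" and PS :: "'s::finite \<Rightarrow> real" and PYX :: "'x::finite \<Rightarrow> 'y::finite \<Rightarrow> real"
    and A :: "'s \<Rightarrow> 'x \<Rightarrow> real" and B :: "'y \<Rightarrow> 'h::finite \<Rightarrow> real"
  assumes cv: "convex_on {0<..} f" and PSpos: "\<forall>s. 0 < PS s" and Ppos: "\<forall>x y. 0 < PYX x y"
    and AK: "is_kernel A" and BK: "is_kernel B" and apos: "\<forall>s h. 0 < induced_channel PYX A B s h"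
  shows "Phi PS f (induced_channel PYX A B) \<le> fI_SY f PS A PYX"
proof -
  define a' where "a' = induced_channel PYX A B"
  define J where "J = SY_joint PS A PYX"
  define PY where "PY y = (\<Sum>s\<in>UNIV. J s y)" for y
  define r where "r s y = PS s * PY y / J s y" for s y
  have B0: "0 \<le> B y h" and B1: "(\<Sum>h\<in>UNIV. B y h) = 1" for y h
    using BK by (auto simp: is_kernel_def is_pmf_def)
  have Jpos: "0 < J s y" for s y unfolding J_def by (rule SY_joint_pos[OF PSpos AK Ppos])
  have a'J: "a' s h * PS s = (\<Sum>y\<in>UNIV. J s y * B y h)" for s h
    unfolding a'_def J_def by (rule induced_channel_from_SY_joint)
  have jensen_y: "a' s h * PS s * f ((\<Sum>s'\<in>UNIV. a' s' h * PS s') / a' s h)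
      \<le> (\<Sum>y\<in>UNIV. J s y * B y h * f (r s y))" for s h
  proof -
    have summand: "J s y * B y h * r s y = PS s * (PY y * B y h)" for y
      using Jpos[of s y] by (simp add: r_def field_simps)
    have "(\<Sum>y\<in>UNIV. J s y * B y h * r s y) = PS s * (\<Sum>y\<in>UNIV. PY y * B y h)"
      unfolding sum_distrib_left by (rule sum.cong[OF refl summand])
    also have "(\<Sum>y\<in>UNIV. PY y * B y h) = (\<Sum>s'\<in>UNIV. a' s' h * PS s')"
      unfolding a'J PY_def by (subst sum.swap) (simp add: sum_distrib_right)
    finally have num: "(\<Sum>y\<in>UNIV. J s y * B y h * r s y) = PS s * (\<Sum>s'\<in>UNIV. a' s' h * PS s')" .
    have PYpos: "0 < PY y" for y unfolding PY_def using Jpos by (intro sum_pos) auto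
    have nn: "0 \<le> J s y * B y h" for y using Jpos[of s y] B0[of y h] by simp
    have ne: "a' s h \<noteq> 0" "PS s \<noteq> 0"
      unfolding a'_def using apos[rule_format, of s h] PSpos[rule_format, of s] by simp_all
    have W: "0 < (\<Sum>y\<in>UNIV. J s y * B y h)"
      unfolding a'J[symmetric] a'_def using apos PSpos by (simp add: zero_less_mult_iff)
    have "(\<Sum>y\<in>UNIV. J s y * B y h) * f ((\<Sum>y\<in>UNIV. J s y * B y h * r s y) / (\<Sum>y\<in>UNIV. J s y * B y h))
        \<le> (\<Sum>y\<in>UNIV. J s y * B y h * f (r s y))"
      using nn Jpos PYpos PSpos W by (intro weighted_jensen[OF cv]) (auto simp: r_def)
    then show ?thesis unfolding num a'J[symmetric] using ne by simp
  qed
  have "Phi PS f a' \<le> (\<Sum>s\<in>UNIV. \<Sum>h\<in>UNIV. \<Sum>y\<in>UNIV. J s y * B y h * f (r s y))"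
    unfolding Phi_def by (intro sum_mono jensen_y)
  also have "\<dots> = (\<Sum>s\<in>UNIV. \<Sum>y\<in>UNIV. J s y * f (r s y))"
  proof (rule sum.cong[OF refl])
    fix s
    have "(\<Sum>h\<in>UNIV. \<Sum>y\<in>UNIV. J s y * B y h * f (r s y)) = (\<Sum>y\<in>UNIV. \<Sum>h\<in>UNIV. J s y * f (r s y) * B y h)"
      by (subst sum.swap) (simp add: mult_ac)
    then show "(\<Sum>h\<in>UNIV. \<Sum>y\<in>UNIV. J s y * B y h * f (r s y)) = (\<Sum>y\<in>UNIV. J s y * f (r s y))"
      by (simp add: B1 flip: sum_distrib_left)
  qed
  also have "\<dots> = fI_SY f PS A PYX"
    by (simp add: fI_SY_def J_def r_def PY_def)
  finally show ?thesis unfolding a'_def .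
qed

lemma data_processing_input:
  fixes f :: "real \<Rightarrow> real" and PS :: "'s::finite \<Rightarrow> real" and PYX :: "'x::finite \<Rightarrow> 'y::finite \<Rightarrow> real"
    and A :: "'s \<Rightarrow> 'x \<Rightarrow> real"
  assumes cv: "convex_on {0<..} f" and PSpos: "\<forall>s. 0 < PS s" and Ppos: "\<forall>x y. 0 < PYX x y"
    and AK: "is_kernel A"
  shows "fI_SY f PS A PYX \<le> Psi PYX f (input_marginal PS A)"
proof -
  define J where "J = SY_joint PS A PYX"
  define PY where "PY y = (\<Sum>s\<in>UNIV. J s y)" for y
  have A0: "0 \<le> A s x" and A1: "(\<Sum>x\<in>UNIV. A s x) = 1" for s x
    using AK by (auto simp: is_kernel_def is_pmf_def)
  have Jpos: "0 < J s y" for s y unfolding J_def by (rule SY_joint_pos[OF PSpos AK Ppos])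
  have PYpos: "0 < PY y" for y unfolding PY_def using Jpos by (intro sum_pos) auto
  have jensen_x: "J s y * f (PS s * PY y / J s y) \<le> (\<Sum>x\<in>UNIV. PS s * A s x * PYX x y * f (PY y / PYX x y))"
    for s y
  proof -
    have weights: "(\<Sum>x\<in>UNIV. PS s * A s x * PYX x y) = J s y"
      unfolding J_def SY_joint_def by (simp add: sum_distrib_left mult_ac)
    have "(\<Sum>x\<in>UNIV. PS s * A s x * PYX x y * (PY y / PYX x y)) = (\<Sum>x\<in>UNIV. A s x * (PS s * PY y))"
      using Ppos by (intro sum.cong) (auto simp: field_simps dest: spec2[of _ _ y] less_imp_neq[THEN not_sym])
    also have "\<dots> = PS s * PY y" by (simp add: A1 flip: sum_distrib_right)
    finally have num: "(\<Sum>x\<in>UNIV. PS s * A s x * PYX x y * (PY y / PYX x y)) = PS s * PY y" .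
    have "(\<Sum>x\<in>UNIV. PS s * A s x * PYX x y)
          * f ((\<Sum>x\<in>UNIV. PS s * A s x * PYX x y * (PY y / PYX x y)) / (\<Sum>x\<in>UNIV. PS s * A s x * PYX x y))
        \<le> (\<Sum>x\<in>UNIV. PS s * A s x * PYX x y * f (PY y / PYX x y))"
    proof (rule weighted_jensen[OF cv])
      show "0 \<le> PS s * A s x * PYX x y" for x
        using PSpos[rule_format, of s] A0[of s x] Ppos[rule_format, of x y] by simp
      show "0 < PY y / PYX x y" for x using PYpos Ppos by simp
    qed (use Jpos weights in auto)
    then show ?thesis unfolding num weights .
  qed
  define T where "T s x y = PS s * A s x * PYX x y * f (PY y / PYX x y)" for s x y
  have "fI_SY f PS A PYX \<le> (\<Sum>s\<in>UNIV. \<Sum>y\<in>UNIV. \<Sum>x\<in>UNIV. T s x y)"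
    unfolding fI_SY_def J_def[symmetric] PY_def[symmetric] T_def by (intro sum_mono jensen_x)
  also have "\<dots> = (\<Sum>s\<in>UNIV. \<Sum>x\<in>UNIV. \<Sum>y\<in>UNIV. T s x y)"
    by (rule sum.cong[OF refl], rule sum.swap)
  also have "\<dots> = (\<Sum>x\<in>UNIV. \<Sum>s\<in>UNIV. \<Sum>y\<in>UNIV. T s x y)"
    by (rule sum.swap)
  also have "\<dots> = (\<Sum>x\<in>UNIV. \<Sum>y\<in>UNIV. \<Sum>s\<in>UNIV. T s x y)"
    by (rule sum.cong[OF refl], rule sum.swap)
  also have "\<dots> = Psi PYX f (input_marginal PS A)"
    unfolding Psi_def T_def PY_def J_def SY_joint_output_marginal
    by (simp add: input_marginal_def sum_distrib_left sum_distrib_right mult_ac)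
  finally show ?thesis .
qed

lemma data_processing:
  assumes "convex_on {0<..} f" "\<forall>s. 0 < PS s" "\<forall>x y. 0 < PYX x y" "is_kernel A" "is_kernel B"
    and "\<forall>s h. 0 < induced_channel PYX A B s h"
  shows "Phi PS f (induced_channel PYX A B) \<le> Psi PYX f (input_marginal PS A)"
  using data_processing_output[OF assms] data_processing_input[OF assms(1-4)] by (rule order_trans)

lemma Qset_eq_cascades:
  "Qset PS PYX = {cascade_joint PS A PYX B | A B. is_kernel A \<and> is_kernel B}"
  by (auto simp: Qset_def cascade_joint_def)

lemma marg_SH_cascade:
  "marg_SH (cascade_joint PS A PYX B) s h = PS s * induced_channel PYX A B s h"
  by (simp add: marg_SH_def cascade_joint_def induced_channel_def sum_distrib_left mult_ac)

lemma marg_X_cascade: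
  assumes "is_kernel PYX" "is_kernel B"
  shows "marg_X (cascade_joint PS A PYX B) = input_marginal PS A"
proof
  fix x
  have "marg_X (cascade_joint PS A PYX B) x
      = (\<Sum>s\<in>UNIV. PS s * A s x * (\<Sum>y\<in>UNIV. PYX x y * (\<Sum>h\<in>UNIV. B y h)))"
    by (simp add: marg_X_def cascade_joint_def sum_distrib_left mult_ac)
  then show "marg_X (cascade_joint PS A PYX B) x = input_marginal PS A x"
    using assms by (simp add: is_kernel_def is_pmf_def input_marginal_def)
qed

lemma cascade_parameters:
  assumes "\<forall>s. 0 < PS s" "is_kernel PYX" "is_kernel B"
  shows "(\<lambda>s h. marg_SH (cascade_joint PS A PYX B) s h / PS s) = induced_channel PYX A B"
    and "marg_X (cascade_joint PS A PYX B) = input_marginal PS A"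
  using assms by (auto simp: marg_SH_cascade marg_X_cascade fun_eq_iff dest: less_imp_neq[THEN not_sym])

lemma input_marginal_pmf:
  assumes "is_pmf PS" "is_kernel A"
  shows "is_pmf (input_marginal PS A)"
proof -
  have "(\<Sum>x\<in>UNIV. input_marginal PS A x) = (\<Sum>s\<in>UNIV. PS s * (\<Sum>x\<in>UNIV. A s x))"
    unfolding input_marginal_def by (subst sum.swap) (simp add: sum_distrib_left)
  then show ?thesis
    using assms by (auto simp: is_pmf_def is_kernel_def input_marginal_def intro!: sum_nonneg)
qed

lemma induced_channel_kernel:
  assumes "is_kernel A" "is_kernel PYX" "is_kernel B"
  shows "is_kernel (induced_channel PYX A B)"
proof -
  have "(\<Sum>h\<in>UNIV. induced_channel PYX A B s h)
      = (\<Sum>x\<in>UNIV. A s x * (\<Sum>y\<in>UNIV. PYX x y * (\<Sum>h\<in>UNIV. B y h)))" for s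
    unfolding induced_channel_def sum_distrib_left
    by (subst sum.swap, rule sum.cong[OF refl], subst sum.swap) (rule refl)
  then show ?thesis
    using assms by (auto simp: is_kernel_def is_pmf_def induced_channel_def intro!: sum_nonneg mult_nonneg_nonneg)
qed

lemma induced_channel_pos:
  assumes "is_kernel A" "is_kernel PYX" "\<forall>y h. 0 < B y h"
  shows "0 < induced_channel PYX A B s h"
proof -
  have "0 < (\<Sum>y\<in>UNIV. PYX x y * B y h)" for x
    using assms pmf_weighted_sum_pos[of "PYX x" "\<lambda>y. B y h"] by (simp add: is_kernel_def)
  then show ?thesis
    using assms pmf_weighted_sum_pos[of "A s"] by (simp add: is_kernel_def induced_channel_def)
qed

definition cost :: "('s \<Rightarrow> 'h \<Rightarrow> real) \<Rightarrow> ('x \<Rightarrow> real) \<Rightarrow> ('s \<times> 'x \<times> 'y \<times> 'h \<Rightarrow> real) \<Rightarrow> real" where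
  "cost \<delta> \<rho> Q = (\<Sum>z\<in>UNIV. Q z * (\<delta> (fst z) (snd (snd (snd z))) + \<rho> (fst (snd z))))"

lemma cost_linear:
  "cost \<delta> \<rho> (\<lambda>z. c1 * Q1 z + c2 * Q2 z) = c1 * cost \<delta> \<rho> Q1 + c2 * cost \<delta> \<rho> Q2"
  by (simp add: cost_def distrib_right sum.distrib sum_distrib_left mult.assoc)

lemma sum_UNIV_quadruples:
  fixes g :: "'a::finite \<times> 'b::finite \<times> 'c::finite \<times> 'd::finite \<Rightarrow> real"
  shows "(\<Sum>z\<in>UNIV. g z) = (\<Sum>a\<in>UNIV. \<Sum>b\<in>UNIV. \<Sum>c\<in>UNIV. \<Sum>d\<in>UNIV. g (a,b,c,d))"
  by (simp add: sum.cartesian_product UNIV_Times_UNIV[symmetric] del: UNIV_Times_UNIV)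

lemma cost_via_marginals:
  fixes Q :: "'s::finite \<times> 'x::finite \<times> 'y::finite \<times> 'h::finite \<Rightarrow> real"
  shows "cost \<delta> \<rho> Q = (\<Sum>s\<in>UNIV. \<Sum>h\<in>UNIV. marg_SH Q s h * \<delta> s h) + (\<Sum>x\<in>UNIV. marg_X Q x * \<rho> x)"
proof -
  have "cost \<delta> \<rho> Q = (\<Sum>s\<in>UNIV. \<Sum>x\<in>UNIV. \<Sum>y\<in>UNIV. \<Sum>h\<in>UNIV. Q (s,x,y,h) * \<delta> s h)
      + (\<Sum>s\<in>UNIV. \<Sum>x\<in>UNIV. \<Sum>y\<in>UNIV. \<Sum>h\<in>UNIV. Q (s,x,y,h) * \<rho> x)"
    unfolding cost_def sum_UNIV_quadruples by (simp add: distrib_left sum.distrib)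
  also have "(\<Sum>s\<in>UNIV. \<Sum>x\<in>UNIV. \<Sum>y\<in>UNIV. \<Sum>h\<in>UNIV. Q (s,x,y,h) * \<delta> s h)
      = (\<Sum>s\<in>UNIV. \<Sum>h\<in>UNIV. marg_SH Q s h * \<delta> s h)"
  proof (rule sum.cong[OF refl])
    fix s
    have "(\<Sum>x\<in>UNIV. \<Sum>y\<in>UNIV. \<Sum>h\<in>UNIV. Q (s,x,y,h) * \<delta> s h)
        = (\<Sum>x\<in>UNIV. \<Sum>h\<in>UNIV. \<Sum>y\<in>UNIV. Q (s,x,y,h) * \<delta> s h)"
      by (rule sum.cong[OF refl], rule sum.swap)
    also have "\<dots> = (\<Sum>h\<in>UNIV. \<Sum>x\<in>UNIV. \<Sum>y\<in>UNIV. Q (s,x,y,h) * \<delta> s h)"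
      by (rule sum.swap)
    finally show "(\<Sum>x\<in>UNIV. \<Sum>y\<in>UNIV. \<Sum>h\<in>UNIV. Q (s,x,y,h) * \<delta> s h)
        = (\<Sum>h\<in>UNIV. marg_SH Q s h * \<delta> s h)"
      by (simp add: marg_SH_def sum_distrib_right)
  qed
  also have "(\<Sum>s\<in>UNIV. \<Sum>x\<in>UNIV. \<Sum>y\<in>UNIV. \<Sum>h\<in>UNIV. Q (s,x,y,h) * \<rho> x)
      = (\<Sum>x\<in>UNIV. marg_X Q x * \<rho> x)"
    by (subst sum.swap) (simp add: marg_X_def sum_distrib_right)
  finally show ?thesis .
qed

lemma cost_multiplier_form:
  fixes PS :: "'s::finite \<Rightarrow> real" and a' D1 :: "'s \<Rightarrow> 'h::finite \<Rightarrow> real"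
    and b' D2 nub :: "'x::finite \<Rightarrow> real"
  assumes PSpos: "\<forall>s. 0 < PS s" and a1: "\<And>s. (\<Sum>h\<in>UNIV. a' s h) = 1" and b1: "(\<Sum>x\<in>UNIV. b' x) = 1"
  shows "(\<Sum>s\<in>UNIV. \<Sum>h\<in>UNIV. PS s * a' s h * (- (lam / PS s) * D1 s h + mua s))
           + (\<Sum>x\<in>UNIV. b' x * (lam * D2 x + mub + nub x))
    = lam * ((\<Sum>x\<in>UNIV. b' x * D2 x) - (\<Sum>s\<in>UNIV. \<Sum>h\<in>UNIV. a' s h * D1 s h))
      + (\<Sum>s\<in>UNIV. PS s * mua s) + mub + (\<Sum>x\<in>UNIV. nub x * b' x)"
proof -
  have "PS s * a' s h * (- (lam / PS s) * D1 s h + mua s) = - (lam * (a' s h * D1 s h)) + PS s * mua s * a' s h"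
    for s h using PSpos[rule_format, of s] by (simp add: field_simps)
  then have "(\<Sum>s\<in>UNIV. \<Sum>h\<in>UNIV. PS s * a' s h * (- (lam / PS s) * D1 s h + mua s))
      = (\<Sum>s\<in>UNIV. - (lam * (\<Sum>h\<in>UNIV. a' s h * D1 s h)) + PS s * mua s * (\<Sum>h\<in>UNIV. a' s h))"
    by (simp only: sum.distrib sum_negf sum_distrib_left)
  also have "\<dots> = (\<Sum>s\<in>UNIV. - (lam * (\<Sum>h\<in>UNIV. a' s h * D1 s h)) + PS s * mua s)"
    by (simp add: a1)
  also have "\<dots> = - (lam * (\<Sum>s\<in>UNIV. \<Sum>h\<in>UNIV. a' s h * D1 s h)) + (\<Sum>s\<in>UNIV. PS s * mua s)"
    by (simp only: sum.distrib sum_negf sum_distrib_left)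
  finally have s1: "(\<Sum>s\<in>UNIV. \<Sum>h\<in>UNIV. PS s * a' s h * (- (lam / PS s) * D1 s h + mua s))
      = - (lam * (\<Sum>s\<in>UNIV. \<Sum>h\<in>UNIV. a' s h * D1 s h)) + (\<Sum>s\<in>UNIV. PS s * mua s)" .
  have "(\<Sum>x\<in>UNIV. b' x * (lam * D2 x + mub + nub x))
      = lam * (\<Sum>x\<in>UNIV. b' x * D2 x) + mub * (\<Sum>x\<in>UNIV. b' x) + (\<Sum>x\<in>UNIV. nub x * b' x)"
    by (simp add: distrib_left sum.distrib sum_distrib_left mult_ac)
  then show ?thesis unfolding s1 b1 by (simp add: algebra_simps)
qed

text \<open>It combines the tangent inequalities of concave Psi and convex Phi, the data
  processing inequality Phi(a') \<le> Psi(b') and complementary slackness.\<close>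
lemma multiplier_gap:
  fixes PS :: "'s::finite \<Rightarrow> real" and PYX :: "'x::finite \<Rightarrow> 'y::finite \<Rightarrow> real"
    and a a' :: "'s \<Rightarrow> 'h::finite \<Rightarrow> real" and b b' :: "'x \<Rightarrow> real"
  assumes fd: "\<And>z. z > 0 \<Longrightarrow> (f has_real_derivative f' z) (at z)"
    and sad: "saddle_property f" and PSpos: "\<forall>s. 0 < PS s"
    and K: "is_kernel PYX" and Ppos: "\<forall>x y. 0 < PYX x y"
    and apos: "\<forall>s h. 0 < a s h" and a'pos: "\<forall>s h. 0 < a' s h"
    and bm: "is_pmf b" and b'm: "is_pmf b'" and dpi: "Phi PS f a' \<le> Psi PYX f b'"
    and lam: "0 \<le> lam" and compl: "lam * (Psi PYX f b - Phi PS f a) = 0"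
  shows "lam * ((\<Sum>x\<in>UNIV. b x * dPsi PYX f b x) - (\<Sum>s\<in>UNIV. \<Sum>h\<in>UNIV. a s h * dPhi PS f a s h))
       \<le> lam * ((\<Sum>x\<in>UNIV. b' x * dPsi PYX f b x) - (\<Sum>s\<in>UNIV. \<Sum>h\<in>UNIV. a' s h * dPhi PS f a s h))"
proof -
  have cv: "convex_on {0<..} f" using sad by (simp add: saddle_property_def)
  define G where "G a0 b0 = (\<Sum>x\<in>UNIV. b0 x * dPsi PYX f b x) - (\<Sum>s\<in>UNIV. \<Sum>h\<in>UNIV. a0 s h * dPhi PS f a s h)"
    for a0 :: "'s \<Rightarrow> 'h \<Rightarrow> real" and b0 :: "'x \<Rightarrow> real"
  have "G a' b' - G a b = (\<Sum>x\<in>UNIV. (b' x - b x) * dPsi PYX f b x)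
       - (\<Sum>s\<in>UNIV. \<Sum>h\<in>UNIV. (a' s h - a s h) * dPhi PS f a s h)"
    by (simp add: G_def left_diff_distrib sum_subtractf)
  also have "\<dots> \<ge> Phi PS f a - Psi PYX f b"
    using Psi_tangent[OF fd sad K Ppos bm b'm] Phi_tangent[OF fd cv PSpos apos a'pos] dpi by linarith
  finally have "lam * (Phi PS f a - Psi PYX f b) \<le> lam * (G a' b' - G a b)"
    using lam by (rule mult_left_mono)
  moreover have "lam * (Phi PS f a - Psi PYX f b) = - (lam * (Psi PYX f b - Phi PS f a))"
    by (simp add: algebra_simps)
  ultimately have "lam * G a b \<le> lam * G a' b'"
    using compl right_diff_distrib[of lam "G a' b'" "G a b"] by linarith
  then show ?thesis by (simp only: G_def)
qed

lemma cost_le_at_positive_channel: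
  fixes PS :: "'s::finite \<Rightarrow> real" and PYX :: "'x::finite \<Rightarrow> 'y::finite \<Rightarrow> real"
    and A A' :: "'s \<Rightarrow> 'x \<Rightarrow> real" and B B' :: "'y \<Rightarrow> 'h::finite \<Rightarrow> real"
  assumes fd: "\<And>z. z > 0 \<Longrightarrow> (f has_real_derivative f' z) (at z)"
    and sad: "saddle_property f" and PS: "is_pmf PS" and PSpos: "\<forall>s. 0 < PS s"
    and K: "is_kernel PYX" and Ppos: "\<forall>x y. 0 < PYX x y"
    and AK: "is_kernel A" and BK: "is_kernel B" and A'K: "is_kernel A'" and B'K: "is_kernel B'"
    and a: "a = induced_channel PYX A B" and b: "b = input_marginal PS A"
    and apos: "\<forall>s h. 0 < a s h" and a'pos: "\<forall>s h. 0 < induced_channel PYX A' B' s h"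
    and lam: "0 \<le> lam" and compl: "lam * (Psi PYX f b - Phi PS f a) = 0"
    and nub: "\<forall>x. 0 \<le> nub x" and nub_b: "(\<Sum>x\<in>UNIV. nub x * b x) = 0"
    and \<delta>: "\<delta> = (\<lambda>s h. - (lam / PS s) * dPhi PS f a s h + mua s)"
    and \<rho>: "\<rho> = (\<lambda>x. lam * dPsi PYX f b x + mub + nub x)"
  shows "cost \<delta> \<rho> (cascade_joint PS A PYX B) \<le> cost \<delta> \<rho> (cascade_joint PS A' PYX B')"
proof -
  define a' where "a' = induced_channel PYX A' B'"
  define b' where "b' = input_marginal PS A'"
  have b'm: "is_pmf b'" and bm: "is_pmf b"
    unfolding b'_def b using PS AK A'K by (simp_all add: input_marginal_pmf)
  have a'1: "(\<Sum>h\<in>UNIV. a' s h) = 1" and a1: "(\<Sum>h\<in>UNIV. a s h) = 1" for s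
    using induced_channel_kernel[OF A'K K B'K] induced_channel_kernel[OF AK K BK]
    by (simp_all add: a'_def a is_kernel_def is_pmf_def)
  have "Phi PS f a' \<le> Psi PYX f b'"
    unfolding a'_def b'_def using sad PSpos Ppos A'K B'K a'pos
    by (intro data_processing) (simp_all add: saddle_property_def)
  then have gap: "lam * ((\<Sum>x\<in>UNIV. b x * dPsi PYX f b x) - (\<Sum>s\<in>UNIV. \<Sum>h\<in>UNIV. a s h * dPhi PS f a s h))
       \<le> lam * ((\<Sum>x\<in>UNIV. b' x * dPsi PYX f b x) - (\<Sum>s\<in>UNIV. \<Sum>h\<in>UNIV. a' s h * dPhi PS f a s h))"
    using multiplier_gap[OF fd sad PSpos K Ppos apos _ bm b'm _ lam compl] a'pos by (simp add: a'_def)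
  have "0 \<le> (\<Sum>x\<in>UNIV. nub x * b' x)"
    using nub b'm by (auto simp: is_pmf_def intro!: sum_nonneg)
  moreover have cost_eq: "cost \<delta> \<rho> (cascade_joint PS A2 PYX B2)
      = lam * ((\<Sum>x\<in>UNIV. b2 x * dPsi PYX f b x) - (\<Sum>s\<in>UNIV. \<Sum>h\<in>UNIV. a2 s h * dPhi PS f a s h))
        + (\<Sum>s\<in>UNIV. PS s * mua s) + mub + (\<Sum>x\<in>UNIV. nub x * b2 x)"
    if "is_kernel B2" "a2 = induced_channel PYX A2 B2" "b2 = input_marginal PS A2"
      "\<And>s. (\<Sum>h\<in>UNIV. a2 s h) = 1" "is_pmf b2" for A2 B2 a2 b2
    unfolding cost_via_marginals marg_SH_cascade marg_X_cascade[OF K that(1)] that(2,3)[symmetric] \<delta> \<rho>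
    by (rule cost_multiplier_form[OF PSpos that(4)]) (use that(5) in \<open>simp add: is_pmf_def\<close>)
  ultimately show ?thesis
    using gap nub_b cost_eq[OF BK a b a1 bm] cost_eq[OF B'K a'_def b'_def a'1 b'm] by linarith
qed

text \<open>The cost of a cascade is a limit of costs of cascades with positive output kernels:
  mix B with the uniform kernel.\<close>
lemma cost_lower_bound_from_positive_kernels:
  fixes PS :: "'s::finite \<Rightarrow> real" and PYX :: "'x::finite \<Rightarrow> 'y::finite \<Rightarrow> real"
    and A :: "'s \<Rightarrow> 'x \<Rightarrow> real" and B :: "'y \<Rightarrow> 'h::finite \<Rightarrow> real"
  assumes pos: "\<And>B'. is_kernel B' \<Longrightarrow> \<forall>y h. 0 < B' y h \<Longrightarrow> c \<le> cost \<delta> \<rho> (cascade_joint PS A PYX B')"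
    and BK: "is_kernel B"
  shows "c \<le> cost \<delta> \<rho> (cascade_joint PS A PYX B)"
proof -
  define U :: "'y \<Rightarrow> 'h \<Rightarrow> real" where "U y h = 1 / real CARD('h)" for y h
  have "c \<le> (1 - e) * cost \<delta> \<rho> (cascade_joint PS A PYX B) + e * cost \<delta> \<rho> (cascade_joint PS A PYX U)"
    if e: "0 < e" "e < 1" for e
  proof -
    define B' where "B' y h = (1 - e) * B y h + e * U y h" for y h
    have "is_kernel B'" "\<forall>y h. 0 < B' y h"
      using BK e
      by (auto simp: B'_def U_def is_kernel_def is_pmf_def sum.distrib
          simp flip: sum_distrib_left intro!: add_nonneg_pos)
    then have "c \<le> cost \<delta> \<rho> (cascade_joint PS A PYX B')" by (rule pos)
    also have "cascade_joint PS A PYX B'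
        = (\<lambda>z. (1 - e) * cascade_joint PS A PYX B z + e * cascade_joint PS A PYX U z)"
      by (auto simp: cascade_joint_def B'_def fun_eq_iff algebra_simps)
    finally show ?thesis
      by (simp only: cost_linear)
  qed
  then show ?thesis by (rule le_of_le_convex_combinations)
qed

theorem theorem4p1:
  fixes PS :: "'s::finite \<Rightarrow> real" and PYX :: "'x::finite \<Rightarrow> 'y::finite \<Rightarrow> real"
    and f :: "real \<Rightarrow> real"
    and Q :: "'s \<times> 'x \<times> 'y \<times> 'h::finite \<Rightarrow> real"
    and lam mub :: real and mua :: "'s \<Rightarrow> real" and nub :: "'x \<Rightarrow> real"
    and a :: "'s \<Rightarrow> 'h \<Rightarrow> real" and b :: "'x \<Rightarrow> real"
    and \<delta> :: "'s \<Rightarrow> 'h \<Rightarrow> real" and \<rho> :: "'x \<Rightarrow> real"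
  assumes PS_pmf: "is_pmf PS" and PS_pos: "\<forall>s. 0 < PS s"
    and PYX_kernel: "is_kernel PYX" and PYX_pos: "\<forall>x y. 0 < PYX x y"
    and f_C1: "f C1_differentiable_on {0<..}"
    and f_saddle: "saddle_property f"
    and Q_in: "Q \<in> Qset PS PYX"
    and a_def: "a = (\<lambda>s h. marg_SH Q s h / PS s)"
    and b_def: "b = marg_X Q"
    and a_pos: "\<forall>s h. 0 < a s h"
    and lam_nonneg: "0 \<le> lam"
    and compl: "lam * (Psi PYX f b - Phi PS f a) = 0"
    and nub_nonneg: "\<forall>x. 0 \<le> nub x"
    and nub_b: "(\<Sum>x\<in>UNIV. nub x * b x) = 0"
    and \<delta>_def: "\<delta> = (\<lambda>s h. - (lam / PS s) * dPhi PS f a s h + mua s)"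
    and \<rho>_def: "\<rho> = (\<lambda>x. lam * dPsi PYX f b x + mub + nub x)"
  shows "\<forall>Q' \<in> Qset PS PYX.
           (\<Sum>z\<in>UNIV. Q z * (\<delta> (fst z) (snd (snd (snd z))) + \<rho> (fst (snd z))))
         \<le> (\<Sum>z\<in>UNIV. Q' z * (\<delta> (fst z) (snd (snd (snd z))) + \<rho> (fst (snd z))))"
proof (unfold cost_def[symmetric], intro ballI)
  obtain A B where AK: "is_kernel A" and BK: "is_kernel B" and Q: "Q = cascade_joint PS A PYX B"
    using Q_in unfolding Qset_eq_cascades by blast
  have fd: "\<And>z. z > 0 \<Longrightarrow> (f has_real_derivative deriv f z) (at z)"
    using f_C1 unfolding C1_differentiable_on_eq by (simp add: DERIV_deriv_iff_real_differentiable)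
  have a: "a = induced_channel PYX A B" and b: "b = input_marginal PS A"
    unfolding a_def b_def Q using cascade_parameters[OF PS_pos PYX_kernel BK] by simp_all
  fix Q' :: "'s \<times> 'x \<times> 'y \<times> 'h \<Rightarrow> real" assume "Q' \<in> Qset PS PYX"
  then obtain A' B' where A'K: "is_kernel A'" and B'K: "is_kernel B'" and Q': "Q' = cascade_joint PS A' PYX B'"
    unfolding Qset_eq_cascades by blast
  have "cost \<delta> \<rho> Q \<le> cost \<delta> \<rho> (cascade_joint PS A' PYX B'')"
    if "is_kernel B''" "\<forall>y h. 0 < B'' y h" for B''
  proof -
    have pos: "\<forall>s h. 0 < induced_channel PYX A' B'' s h"
      using induced_channel_pos[OF A'K PYX_kernel that(2)] by simp
    show ?thesis
      unfolding Q by (rule cost_le_at_positive_channel[OF fd f_saddle PS_pmf PS_pos PYX_kernel PYX_pos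
          AK BK A'K that(1) a b a_pos pos lam_nonneg compl nub_nonneg nub_b \<delta>_def \<rho>_def]) simp
  qed
  then show "cost \<delta> \<rho> Q \<le> cost \<delta> \<rho> Q'"
    unfolding Q' by (rule cost_lower_bound_from_positive_kernels[OF _ B'K])
qed

end
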